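(* There is an absolute constant $c>0$ such that for every $m\ge 3$ and every $n$ that is a multiple of $m-1$ with $n\ge 2(m-1)$, there is a preference profile with $n$ agents and $m$ alternatives on which Plurality Veto (with any processing order of the agents) has utilitarian distortion at least $c\,n/m$. In particular, the utilitarian distortion of Plurality Veto is $\Omega(n/m)$.
   Context: Setting: $\mathcal N$ is a set of $n$ agents and $\mathcal A$ a set of $m$ alternatives. Each agent $i$ has a strict ranking $\sigma_i$ of $\mathcal A$; $r_i(X)$ is the position of $X$ in $\sigma_i$ (1 = top) and $X\succ_i Y$ means $r_i(X)<r_i(Y)$. The plurality score $\mathrm{plu}(X,\vec\sigma)$ is the number of agents ranking $X$ first. A (randomized) voting rule maps each profile $\vec\sigma=(\sigma_1,\dots,\sigma_n)$ to a probability distribution over $\mathcal A$; it is deterministic if it always outputs a point mass. Utilitarian framework: each agent has $u_i:\mathcal A\to\mathbb R_{\ge 0}$ with $\sum_{X}u_i(X)=1$; the utility profile $\vec u$ is consistent with $\vec\sigma$ if $X\succ_i Y\Rightarrow u_i(X)\ge u_i(Y)$. $\mathrm{SW}(X,\vec u)=\sum_i u_i(X)$. The utilitarian distortion of a distribution $p$ on $\vec u$ is $\max_X \mathrm{SW}(X,\vec u)/\mathbb E_{X\sim p}[\mathrm{SW}(X,\vec u)]$; the utilitarian distortion of a rule $f$ on $\vec\sigma$ is the supremum of this over all $\vec u$ consistent with $\vec\sigma$, and the utilitarian distortion of $f$ is the maximum over all profiles. Plurality Veto: initialize $\mathrm{score}(X)=\mathrm{plu}(X,\vec\sigma)$ for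 every $X$, and let $S$ be the set of alternatives with positive score. Process the agents one by one in some fixed order; when agent $i$ is processed, let $Y$ be the alternative in $S$ that $i$ ranks lowest, decrease $\mathrm{score}(Y)$ by one, and remove $Y$ from $S$ if its score becomes $0$. Output the alternative removed from $S$ last (at the final step). *)

theory Defs
  imports "HOL-Analysis.Analysis"
begin

text \<open>Agents are 0,...,n-1 and alternatives are 0,...,m-1.  A profile is given by
  rank functions: r i X is the position of alternative X in agent i's ranking
  (1 = top).\<close>

definition is_profile :: "nat \<Rightarrow> nat \<Rightarrow> (nat \<Rightarrow> nat \<Rightarrow> nat) \<Rightarrow> bool" where
  "is_profile n m r \<longleftrightarrow> (\<forall>i<n. bij_betw (r i) {..<m} {1..m})"

definition plu :: "nat \<Rightarrow> (nat \<Rightarrow> nat \<Rightarrow> nat) \<Rightarrow> nat \<Rightarrow> nat" where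
  "plu n r X = card {i. i < n \<and> r i X = 1}"

text \<open>One pass of Plurality Veto: the current scores, the remaining agents in
  processing order, and the alternative removed at the last processed step.
  When agent i is processed, Y is the alternative of S = {X<m. score X > 0}
  that i ranks lowest (largest position).\<close>

fun pv_run :: "nat \<Rightarrow> (nat \<Rightarrow> nat \<Rightarrow> nat) \<Rightarrow> (nat \<Rightarrow> nat) \<Rightarrow> nat list \<Rightarrow> nat \<Rightarrow> nat" where
  "pv_run m r score [] lastY = lastY"
| "pv_run m r score (i # is) lastY =
     (let Y = arg_max (r i) (\<lambda>X. X < m \<and> 0 < score X)
      in pv_run m r (score(Y := score Y - 1)) is Y)"

definition plurality_veto :: "nat \<Rightarrow> nat \<Rightarrow> (nat \<Rightarrow> nat \<Rightarrow> nat) \<Rightarrow> nat list \<Rightarrow> nat" where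
  "plurality_veto n m r ord = pv_run m r (plu n r) ord undefined"

definition is_order :: "nat \<Rightarrow> nat list \<Rightarrow> bool" where
  "is_order n ord \<longleftrightarrow> distinct ord \<and> set ord = {..<n}"

definition consistent :: "nat \<Rightarrow> nat \<Rightarrow> (nat \<Rightarrow> nat \<Rightarrow> nat) \<Rightarrow> (nat \<Rightarrow> nat \<Rightarrow> real) \<Rightarrow> bool" where
  "consistent n m r u \<longleftrightarrow>
     (\<forall>i<n. (\<forall>X<m. 0 \<le> u i X) \<and> (\<Sum>X<m. u i X) = 1 \<and>
            (\<forall>X<m. \<forall>Y<m. r i X < r i Y \<longrightarrow> u i Y \<le> u i X))"

definition SW :: "nat \<Rightarrow> (nat \<Rightarrow> nat \<Rightarrow> real) \<Rightarrow> nat \<Rightarrow> real" where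
  "SW n u X = (\<Sum>i<n. u i X)"

definition ratio :: "nat \<Rightarrow> nat \<Rightarrow> (nat \<Rightarrow> nat \<Rightarrow> real) \<Rightarrow> nat \<Rightarrow> ereal" where
  "ratio n m u W = (if SW n u W = 0 then \<infinity>
                    else ereal ((MAX X\<in>{..<m}. SW n u X) / SW n u W))"

definition distortion :: "nat \<Rightarrow> nat \<Rightarrow> (nat \<Rightarrow> nat \<Rightarrow> nat) \<Rightarrow> nat \<Rightarrow> ereal" where
  "distortion n m r W = (SUP u \<in> {u. consistent n m r u}. ratio n m u W)"

end

theory Submission
  imports Defs
begin

text \<open>Every agent ranks 0, 1, 2 on top, in one of four orders, and all other
  alternatives below them in increasing order, so only 0, 1, 2 ever have positive score.
  Three agents rank 0 first, about half of the others rank 1 first and the rest rank 2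
  first, and nobody ranks 0 last among the three.  The agents ranking 1 (resp. 2) last
  outnumber its score and 0's supporters absorb every other veto, so 0 is the output for
  every processing order.  If 0's three supporters spread their utility uniformly and
  everybody else puts all of it on their top choice, then SW(0) = 3/m while SW(1) is
  about n/2, so the distortion is about nm/6, in particular at least n/(4m).\<close>

lemma arg_max_eqI:
  fixes f :: "'a \<Rightarrow> 'b::linorder"
  assumes "P y" "\<And>x. P x \<Longrightarrow> x \<noteq> y \<Longrightarrow> f x < f y"
  shows "arg_max f P = y"
  by (rule arg_maxI[where P = P and f = f and x = y]) (use assms in force)+

lemma less_3_cases: "(X::nat) < 3 \<longleftrightarrow> X = 0 \<or> X = 1 \<or> X = 2"
  by auto

lemma length_filter_is_order:
  assumes "is_order n ord"
  shows "length (filter P ord) = card {i. i < n \<and> P i}"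
proof -
  have "{i. P i} \<inter> set ord = {i. i < n \<and> P i}"
    using assms by (auto simp: is_order_def)
  then show ?thesis
    using assms by (simp add: is_order_def distinct_length_filter)
qed

lemma distortion_ge_SW_quotient:
  assumes "consistent n m r u" "X < m" "0 < SW n u W"
  shows "ereal (SW n u X / SW n u W) \<le> distortion n m r W"
proof -
  have "SW n u X \<le> (MAX Y\<in>{..<m}. SW n u Y)"
    using assms(2) by (intro Max_ge) auto
  then have "ereal (SW n u X / SW n u W) \<le> ratio n m u W"
    using assms(3) by (simp add: ratio_def divide_right_mono)
  also have "\<dots> \<le> distortion n m r W"
    unfolding distortion_def using assms(1) by (intro SUP_upper) auto
  finally show ?thesis .
qed

text \<open>V_abc ranks a \<succ> b \<succ> c \<succ> 3 \<succ> 4 \<succ> \<dots>\<close>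

datatype voter = V012 | V021 | V102 | V201

fun top3 :: "voter \<Rightarrow> nat list" where
  "top3 V012 = [0, 1, 2]"
| "top3 V021 = [0, 2, 1]"
| "top3 V102 = [1, 0, 2]"
| "top3 V201 = [2, 0, 1]"

definition voter_rank :: "voter \<Rightarrow> nat \<Rightarrow> nat" where
  "voter_rank v X =
     (if X < 3 then Suc (length (takeWhile (\<lambda>Y. Y \<noteq> X) (top3 v))) else Suc X)"

lemma voter_rank_pos: "0 < voter_rank v X"
  by (simp add: voter_rank_def)

lemma voter_rank_eq_1_iff: "voter_rank v X = 1 \<longleftrightarrow> X = hd (top3 v)"
  by (cases v) (auto simp: voter_rank_def less_3_cases)

lemma voter_rank_bij:
  assumes "3 \<le> m"
  shows "bij_betw (voter_rank v) {..<m} {1..m}"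
proof -
  have top: "X < 3 \<Longrightarrow> voter_rank v X \<le> 3" for X
    by (cases v) (auto simp: voter_rank_def less_3_cases)
  have inj: "inj_on (voter_rank v) {..<m}"
  proof (rule inj_onI)
    fix X Y assume "voter_rank v X = voter_rank v Y"
    then show "X = Y"
      using top[of X] top[of Y]
      by (cases v) (auto simp: voter_rank_def less_3_cases split: if_splits)
  qed
  have "voter_rank v ` {..<m} \<subseteq> {1..m}"
    using assms top by (force simp: voter_rank_def)
  moreover have "card (voter_rank v ` {..<m}) = card {1..m}"
    using card_image[OF inj] by simp
  ultimately show ?thesis
    using inj by (simp add: bij_betw_def card_subset_eq)
qed

definition veto :: "voter \<Rightarrow> (nat \<Rightarrow> nat) \<Rightarrow> nat" where
  "veto v s = last (filter (\<lambda>X. 0 < s X) (top3 v))"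

lemma arg_max_voter_rank:
  assumes "3 \<le> m" "\<forall>X\<ge>3. s X = 0" "\<exists>X<3. 0 < s X"
  shows "arg_max (voter_rank v) (\<lambda>X. X < m \<and> 0 < s X) = veto v s"
proof (rule arg_max_eqI)
  have "veto v s < 3 \<and> 0 < s (veto v s)"
    using assms(3) by (cases v) (auto simp: veto_def less_3_cases)
  then show "veto v s < m \<and> 0 < s (veto v s)"
    using assms(1) by simp
  fix X assume "X < m \<and> 0 < s X" "X \<noteq> veto v s"
  moreover have "X < 3"
    using assms(2) \<open>X < m \<and> 0 < s X\<close> by (metis not_less less_irrefl)
  ultimately show "voter_rank v X < voter_rank v (veto v s)"
    by (cases v; cases "0 < s 0"; cases "0 < s 1"; cases "0 < s 2")
      (auto simp: veto_def voter_rank_def less_3_cases)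
qed

definition bottom_count :: "(nat \<Rightarrow> voter) \<Rightarrow> nat \<Rightarrow> nat list \<Rightarrow> nat" where
  "bottom_count V X is = length (filter (\<lambda>i. last (top3 (V i)) = X) is)"

text \<open>The remaining agents ranking X \<in> {1, 2} last can veto X out with one veto
  to spare; by the sum condition, 0 and the third alternative then absorb all other
  vetoes, so 0 keeps a positive score until the last agent.\<close>

definition pv_invariant :: "(nat \<Rightarrow> voter) \<Rightarrow> (nat \<Rightarrow> nat) \<Rightarrow> nat list \<Rightarrow> bool" where
  "pv_invariant V s is \<longleftrightarrow>
     (\<forall>X\<ge>3. s X = 0) \<and> s 0 + s 1 + s 2 = length is \<and>
     (0 < s 1 \<longrightarrow> s 1 < bottom_count V 1 is) \<and>
     (0 < s 2 \<longrightarrow> s 2 < bottom_count V 2 is) \<and>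
     (is \<noteq> [] \<longrightarrow> 0 < s 0)"

lemma pv_invariant_step:
  assumes "pv_invariant V s (i # is)"
  shows "pv_invariant V (s(veto (V i) s := s (veto (V i) s) - 1)) is"
  using assms
  by (cases "V i")
    (auto simp: pv_invariant_def bottom_count_def veto_def
      dest: less_le_trans[OF _ length_filter_le])

lemma pv_run_eq_0:
  assumes "3 \<le> m" "pv_invariant V s is" "is \<noteq> []"
  shows "pv_run m (\<lambda>i. voter_rank (V i)) s is y = 0"
  using assms(2,3)
proof (induction "is" arbitrary: s y)
  case Nil
  then show ?case by simp
next
  case (Cons i "is")
  have s: "\<forall>X\<ge>3. s X = 0" "s 0 + s 1 + s 2 = Suc (length is)" "0 < s 0"
    using Cons.prems(1) by (auto simp: pv_invariant_def)
  moreover have "\<exists>X<3. 0 < s X"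
    using s(3) by (intro exI[of _ 0]) simp
  ultimately have veto_i: "arg_max (voter_rank (V i)) (\<lambda>X. X < m \<and> 0 < s X) = veto (V i) s"
    using arg_max_voter_rank[OF assms(1)] by simp
  show ?case
  proof (cases "is = []")
    case True
    then have "s 1 = 0" "s 2 = 0"
      using s by auto
    then have "veto (V i) s = 0"
      using s(3) by (cases "V i") (simp_all add: veto_def)
    then show ?thesis
      using True veto_i by simp
  next
    case False
    have "pv_run m (\<lambda>i. voter_rank (V i)) s (i # is) y =
        pv_run m (\<lambda>i. voter_rank (V i)) (s(veto (V i) s := s (veto (V i) s) - 1)) is (veto (V i) s)"
      using veto_i by (simp add: Let_def)
    also have "\<dots> = 0"
      by (rule Cons.IH[OF pv_invariant_step[OF Cons.prems(1)] False])
    finally show ?thesis .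
  qed
qed

definition top_utility :: "(nat \<Rightarrow> voter) \<Rightarrow> nat \<Rightarrow> nat \<Rightarrow> nat \<Rightarrow> real" where
  "top_utility V m i X =
     (if hd (top3 (V i)) = 0 then 1 / real m
      else if X = hd (top3 (V i)) then 1 else 0)"

lemma consistent_top_utility:
  assumes "3 \<le> m"
  shows "consistent n m (\<lambda>i. voter_rank (V i)) (top_utility V m)"
  unfolding consistent_def
proof (intro allI impI conjI)
  fix i X assume "X < m"
  show "0 \<le> top_utility V m i X"
    by (simp add: top_utility_def)
next
  fix i
  have "hd (top3 (V i)) < m"
    using assms by (cases "V i") auto
  then show "(\<Sum>X<m. top_utility V m i X) = 1"
    using assms by (cases "hd (top3 (V i)) = 0") (simp_all add: top_utility_def)
next
  fix i X Y assume "voter_rank (V i) X < voter_rank (V i) Y"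
  then have "1 < voter_rank (V i) Y"
    using voter_rank_pos[of "V i" X] by linarith
  then have "Y \<noteq> hd (top3 (V i))"
    using voter_rank_eq_1_iff[of "V i" Y] by auto
  then show "top_utility V m i Y \<le> top_utility V m i X"
    by (simp add: top_utility_def)
qed

definition voter_of :: "nat \<Rightarrow> nat \<Rightarrow> voter" where
  "voter_of n i =
     (if i = 0 then V012 else if i < 3 then V021
      else if i < 3 + (n - 2) div 2 then V102 else V201)"

lemma plu_voter_rank:
  "plu n (\<lambda>i. voter_rank (V i)) X = card {i. i < n \<and> hd (top3 (V i)) = X}"
  unfolding plu_def voter_rank_eq_1_iff by (simp add: eq_commute)

lemma pv_invariant_voter_of:
  assumes "4 \<le> n" "is_order n ord"
  shows "pv_invariant (voter_of n) (plu n (\<lambda>i. voter_rank (voter_of n i))) ord"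
proof -
  define h where "h = (n - 2) div 2"
  have "{i. i < n \<and> hd (top3 (voter_of n i)) = 0} = {..<3}"
    "{i. i < n \<and> hd (top3 (voter_of n i)) = 1} = {3..<3 + h}"
    "{i. i < n \<and> hd (top3 (voter_of n i)) = 2} = {3 + h..<n}"
    "{i. i < n \<and> last (top3 (voter_of n i)) = 1} = {1, 2} \<union> {3 + h..<n}"
    "{i. i < n \<and> last (top3 (voter_of n i)) = 2} = insert 0 {3..<3 + h}"
    using assms(1) by (auto simp: voter_of_def h_def)
  moreover have "X \<ge> 3 \<Longrightarrow> {i. i < n \<and> hd (top3 (voter_of n i)) = X} = {}" for X
    by (auto simp: voter_of_def)
  moreover have "length ord = n"
    using length_filter_is_order[OF assms(2), of "\<lambda>_. True"] by simp
  moreover have "1 \<le> h" "2 * h + 2 \<le> n" "n \<le> 2 * h + 3"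
    using assms(1) by (auto simp: h_def)
  ultimately show ?thesis
    unfolding pv_invariant_def bottom_count_def plu_voter_rank
      length_filter_is_order[OF assms(2)]
    by (simp add: card_Un_disjoint) arith
qed

lemma plurality_veto_voter_of:
  assumes "3 \<le> m" "4 \<le> n" "is_order n ord"
  shows "plurality_veto n m (\<lambda>i. voter_rank (voter_of n i)) ord = 0"
proof -
  have "0 \<in> set ord"
    using assms(2,3) by (simp add: is_order_def)
  then have "ord \<noteq> []"
    by auto
  then show ?thesis
    unfolding plurality_veto_def
    by (rule pv_run_eq_0[OF assms(1) pv_invariant_voter_of[OF assms(2,3)]])
qed

lemma SW_top_utility_voter_of_0:
  assumes "4 \<le> n"
  shows "SW n (top_utility (voter_of n) m) 0 = 3 / real m"
proof -
  have "SW n (top_utility (voter_of n) m) 0 = (\<Sum>i<n. if i < 3 then 1 / real m else 0)"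
    unfolding SW_def by (rule sum.cong) (auto simp: top_utility_def voter_of_def)
  also have "\<dots> = (\<Sum>i\<in>{..<n} \<inter> {i. i < 3}. 1 / real m)"
    by (simp add: sum.If_cases)
  also have "{..<n} \<inter> {i. i < 3} = {..<3}"
    using assms by auto
  finally show ?thesis by simp
qed

lemma SW_top_utility_voter_of_1:
  assumes "4 \<le> n"
  shows "real ((n - 2) div 2) \<le> SW n (top_utility (voter_of n) m) 1"
proof -
  have "real ((n - 2) div 2) = (\<Sum>i\<in>{3..<3 + (n - 2) div 2}. top_utility (voter_of n) m i 1)"
    by (simp add: top_utility_def voter_of_def)
  also have "\<dots> \<le> SW n (top_utility (voter_of n) m) 1"
    unfolding SW_def using assms by (intro sum_mono2) (auto simp: top_utility_def)
  finally show ?thesis .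
qed

lemma distortion_voter_of_ge:
  assumes m: "3 \<le> m" and n: "4 \<le> n"
  shows "ereal (1 / 4 * real n / real m) \<le> distortion n m (\<lambda>i. voter_rank (voter_of n i)) 0"
proof -
  let ?u = "top_utility (voter_of n) m"
  define h where "h = real ((n - 2) div 2)"
  have sw0: "SW n ?u 0 = 3 / real m"
    by (rule SW_top_utility_voter_of_0[OF n])
  have "1 / 4 * real n / real m = real n / (4 * real m)"
    by simp
  also have "\<dots> \<le> real n / 12"
    using m by (intro divide_left_mono) auto
  also have "\<dots> \<le> h"
    using n unfolding h_def by linarith
  also have "\<dots> \<le> h * (real m / 3)"
    using mult_left_mono[of 1 "real m / 3" h] m by (simp add: h_def)
  also have "\<dots> = h / (3 / real m)"
    by simp
  also have "\<dots> \<le> SW n ?u 1 / SW n ?u 0"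
    unfolding sw0 h_def using SW_top_utility_voter_of_1[OF n] m
    by (intro divide_right_mono) auto
  finally have "1 / 4 * real n / real m \<le> SW n ?u 1 / SW n ?u 0" .
  moreover have "ereal (SW n ?u 1 / SW n ?u 0) \<le> distortion n m (\<lambda>i. voter_rank (voter_of n i)) 0"
    using m by (intro distortion_ge_SW_quotient consistent_top_utility) (auto simp: sw0)
  ultimately show ?thesis
    by (meson ereal_less_eq(3) order_trans)
qed

theorem mainTheorem1:
  shows "\<exists>c::real. c > 0 \<and>
    (\<forall>m n::nat. m \<ge> 3 \<and> (m - 1) dvd n \<and> n \<ge> 2 * (m - 1) \<longrightarrow>
       (\<exists>r. is_profile n m r \<and>
          (\<forall>ord. is_order n ord \<longrightarrow>
             ereal (c * real n / real m) \<le> distortion n m r (plurality_veto n m r ord))))"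
proof (intro exI[of _ "1 / 4"] conjI allI impI)
  fix m n :: nat
  assume "m \<ge> 3 \<and> (m - 1) dvd n \<and> n \<ge> 2 * (m - 1)"
  then have m: "3 \<le> m" and n: "4 \<le> n"
    by auto
  show "\<exists>r. is_profile n m r \<and> (\<forall>ord. is_order n ord \<longrightarrow>
      ereal (1 / 4 * real n / real m) \<le> distortion n m r (plurality_veto n m r ord))"
    using voter_rank_bij[OF m] plurality_veto_voter_of[OF m n] distortion_voter_of_ge[OF m n]
    by (intro exI[of _ "\<lambda>i. voter_rank (voter_of n i)"]) (simp add: is_profile_def)
qed simp

end
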